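(* Let $\Gamma=\{f_1,\dots,f_n\}$ be a family of weight-functions invariant under translations, i.e. $f_i(x_1+\lambda,\dots,x_n+\lambda)=f_i(x_1,\dots,x_n)$ for every $i$, every $\mathbf{x}\in[0,1]^n$ and every $\lambda\in[0,1]$ with $(x_1+\lambda,\dots,x_n+\lambda)\in[0,1]^n$. Then $\mathsf{BGM}_\Gamma$ (i.e. $\mathbf{x}\mapsto\sum_i f_i(\mathbf{x})x_i$) is a pre-aggregation function which is $(k,\dots,k)$-increasing for every $k>0$.
   Context: A family of weight-functions (FWF) is a family $\Gamma=\{f_i:[0,1]^n\to[0,1]\mid 1\le i\le n\}$ with $\sum_{i=1}^n f_i(\mathbf{x})=1$ for all $\mathbf{x}\in[0,1]^n$; $\mathsf{BGM}_\Gamma(\mathbf{x})=\sum_{i=1}^n f_i(\mathbf{x})\,x_i$. For a nonzero $\mathbf{r}\in\mathbb{R}^n$, $F:[0,1]^n\to[0,1]$ is $\mathbf{r}$-increasing if $F(\mathbf{x})\le F(x_1+tr_1,\dots,x_n+tr_n)$ for all $\mathbf{x}\in[0,1]^n$ and $t>0$ with $(x_1+tr_1,\dots,x_n+tr_n)\in[0,1]^n$. $F$ is a pre-aggregation function if $F(0,\dots,0)=0$, $F(1,\dots,1)=1$ and $F$ is $\mathbf{r}$-increasing for some nonzero $\mathbf{r}\in[0,1]^n$. *)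

theory Defs
  imports "HOL-Analysis.Analysis"
begin

definition unit_cube :: "(real ^ 'n) set" where
  "unit_cube = {x. \<forall>i. x $ i \<in> {0..1}}"

definition FWF :: "('n::finite \<Rightarrow> real ^ 'n \<Rightarrow> real) \<Rightarrow> bool" where
  "FWF f \<longleftrightarrow> (\<forall>x\<in>unit_cube. (\<forall>i. f i x \<in> {0..1}) \<and> (\<Sum>i\<in>UNIV. f i x) = 1)"

definition BGM :: "('n::finite \<Rightarrow> real ^ 'n \<Rightarrow> real) \<Rightarrow> real ^ 'n \<Rightarrow> real" where
  "BGM f x = (\<Sum>i\<in>UNIV. f i x * x $ i)"

definition r_increasing :: "real ^ 'n \<Rightarrow> (real ^ 'n \<Rightarrow> real) \<Rightarrow> bool" where
  "r_increasing r F \<longleftrightarrow> r \<noteq> 0 \<and>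
     (\<forall>x\<in>unit_cube. \<forall>t>0. x + t *\<^sub>R r \<in> unit_cube \<longrightarrow> F x \<le> F (x + t *\<^sub>R r))"

definition pre_aggregation :: "(real ^ 'n \<Rightarrow> real) \<Rightarrow> bool" where
  "pre_aggregation F \<longleftrightarrow> (\<forall>x\<in>unit_cube. F x \<in> {0..1}) \<and>
     F (\<chi> i. 0) = 0 \<and> F (\<chi> i. 1) = 1 \<and>
     (\<exists>r\<in>unit_cube. r \<noteq> 0 \<and> r_increasing r F)"

end

theory Submission
  imports Defs
begin

(* Weights that sum to one and are invariant under the diagonal shift x + (l,...,l) make
   BGM shift-equivariant: it grows by exactly l.  Shifting along (k,...,k) with t > 0 is such
   a shift with l = t k > 0, so BGM is (k,...,k)-increasing; boundedness and the boundary
   values follow because BGM is a convex combination of the coordinates. *)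

lemma BGM_const:
  assumes "(\<Sum>i\<in>UNIV. f i (\<chi> j. c)) = 1"
  shows "BGM f (\<chi> j. c) = c"
  using assms by (simp add: BGM_def flip: sum_distrib_right)

lemma BGM_add_diagonal:
  assumes sum_one: "(\<Sum>i\<in>UNIV. f i x) = 1"
    and invariant: "\<And>i. f i (x + (\<chi> j. l)) = f i x"
  shows "BGM f (x + (\<chi> j. l)) = BGM f x + l"
proof -
  have "BGM f (x + (\<chi> j. l)) = (\<Sum>i\<in>UNIV. f i x * x $ i + f i x * l)"
    by (simp add: BGM_def invariant algebra_simps)
  also have "\<dots> = BGM f x + l * (\<Sum>i\<in>UNIV. f i x)"
    by (simp add: BGM_def sum.distrib sum_distrib_left mult.commute)
  finally show ?thesis
    by (simp add: sum_one)
qed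

lemma BGM_in_unit_interval:
  assumes "FWF f" and x: "x \<in> unit_cube"
  shows "BGM f x \<in> {0..1}"
proof -
  have w: "\<And>i. f i x \<in> {0..1}" and sum_one: "(\<Sum>i\<in>UNIV. f i x) = 1"
    using assms by (auto simp: FWF_def)
  have xi: "\<And>i. x $ i \<in> {0..1}"
    using x by (auto simp: unit_cube_def)
  have "BGM f x \<ge> 0"
    unfolding BGM_def using w xi by (intro sum_nonneg) auto
  moreover have "BGM f x \<le> (\<Sum>i\<in>UNIV. f i x)"
    unfolding BGM_def using w xi by (intro sum_mono) (auto intro: mult_left_le)
  ultimately show ?thesis
    using sum_one by simp
qed

lemma const_in_unit_cube_iff: "(\<chi> j. c) \<in> unit_cube \<longleftrightarrow> c \<in> {0..1}"
  by (simp add: unit_cube_def)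

lemma diagonal_shift_le_one:
  fixes x :: "real ^ 'n"
  assumes "x \<in> unit_cube" and "x + (\<chi> j. l) \<in> unit_cube"
  shows "l \<le> 1"
proof -
  obtain i :: 'n where True by simp
  have "0 \<le> x $ i" and "x $ i + l \<le> 1"
    using assms by (auto simp: unit_cube_def)
  then show ?thesis by linarith
qed

lemma r_increasing_diagonal_BGM:
  fixes f :: "'n::finite \<Rightarrow> real ^ 'n \<Rightarrow> real"
  assumes fwf: "FWF f"
    and invariant: "\<And>i x (l::real). x \<in> unit_cube \<Longrightarrow> l \<in> {0..1} \<Longrightarrow>
           x + (\<chi> j. l) \<in> unit_cube \<Longrightarrow> f i (x + (\<chi> j. l)) = f i x"
    and "k > 0"
  shows "r_increasing (\<chi> j. k) (BGM f)"
  unfolding r_increasing_def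
proof (intro conjI ballI allI impI)
  show "(\<chi> j. k) \<noteq> 0"
    using \<open>k > 0\<close> by (simp add: vec_eq_iff)
next
  fix x :: "real ^ 'n" and t :: real
  assume x: "x \<in> unit_cube" and "t > 0" and shifted: "x + t *\<^sub>R (\<chi> j. k) \<in> unit_cube"
  have shift_eq: "x + t *\<^sub>R (\<chi> j. k) = x + (\<chi> j. t * k)"
    by (simp add: vec_eq_iff)
  have pos: "t * k > 0"
    using \<open>t > 0\<close> \<open>k > 0\<close> by simp
  moreover have "t * k \<le> 1"
    using diagonal_shift_le_one[OF x] shifted unfolding shift_eq .
  ultimately have "\<And>i. f i (x + (\<chi> j. t * k)) = f i x"
    using invariant[OF x] shifted unfolding shift_eq by simp
  moreover have "(\<Sum>i\<in>UNIV. f i x) = 1"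
    using fwf x unfolding FWF_def by blast
  ultimately have "BGM f (x + (\<chi> j. t * k)) = BGM f x + t * k"
    by (rule BGM_add_diagonal[rotated])
  then show "BGM f x \<le> BGM f (x + t *\<^sub>R (\<chi> j. k))"
    using pos by (simp add: shift_eq)
qed

theorem corollary2:
  fixes f :: "'n::finite \<Rightarrow> real ^ 'n \<Rightarrow> real"
  assumes "FWF f"
    and "\<And>i x (l::real). x \<in> unit_cube \<Longrightarrow> l \<in> {0..1} \<Longrightarrow>
           x + (\<chi> j. l) \<in> unit_cube \<Longrightarrow> f i (x + (\<chi> j. l)) = f i x"
  shows "pre_aggregation (BGM f) \<and> (\<forall>k::real>0. r_increasing (\<chi> j. k) (BGM f))"
proof -
  have diagonal: "\<forall>k::real>0. r_increasing (\<chi> j. k) (BGM f)"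
    using r_increasing_diagonal_BGM[OF assms] by blast
  have one_in_cube: "((\<chi> j. 1) :: real ^ 'n) \<in> unit_cube"
    by (simp add: const_in_unit_cube_iff)
  have "BGM f (\<chi> j. 0) = 0"
    by (simp add: BGM_def)
  moreover have "BGM f (\<chi> j. 1) = 1"
    using \<open>FWF f\<close> one_in_cube unfolding FWF_def by (intro BGM_const) blast
  moreover have "((\<chi> j. 1) :: real ^ 'n) \<noteq> 0"
    by (simp add: vec_eq_iff)
  moreover have "r_increasing (\<chi> j. 1) (BGM f)"
    using diagonal by simp
  ultimately show ?thesis
    unfolding pre_aggregation_def
    using diagonal one_in_cube BGM_in_unit_interval[OF \<open>FWF f\<close>] by blast
qed

end
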